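(* Let $P=(N,L)$ be a random filtration pair for a random isolated invariant set $S$ of a random homeomorphism $\varphi$. Then the random pointed space map $\varphi_P(\omega,\cdot):N_L(\omega)\to N_L(\theta\omega)$ preserves base points, satisfies $[L(\omega)]\in\mathrm{int}\,\big(\varphi_P(\omega,\cdot)^{-1}([L(\theta\omega)])\big)$, $\varphi_P(\omega,\cdot)$ is continuous for each $\omega$, and $\varphi_P(\cdot,x)$ is measurable.
   Context: Let $(\Omega,\mathscr F,\mathbb P)$ be a probability space and $\theta:\Omega\to\Omega$ an invertible bimeasurable map preserving $\mathbb P$; write $\theta_n=\theta^n$. Let $(X,d_X)$ be a locally compact separable complete metric space. A random homeomorphism is a map $\varphi:\Omega\times X\to X$ with $\varphi(\cdot,x)$ measurable for every $x$ and $\varphi(\omega,\cdot)$ a homeomorphism for every $\omega$; iterates: $\varphi^n(\omega,\cdot)=\varphi(\theta_{n-1}\omega,\cdot)\circ\cdots\circ\varphi(\omega,\cdot)$ ($n>0$), $\varphi^0=\mathrm{id}_X$, $\varphi^n(\omega,\cdot)=\varphi(\theta_n\omega,\cdot)^{-1}\circ\cdots\circ\varphi(\theta_{-1}\omega,\cdot)^{-1}$ ($n<0$). A multifunction $D$ with compact values is a random compact set if $\omega\mapsto\mathrm{dist}_X(x,D(\omega))$ is measurable for each $x$. $\mathrm{Inv}A(\omega)=\{x\in A(\omega):\varphi^n(\omega,x)\in A(\theta_n\omega)\ \forall n\in\mathbb Z\}$. A random compact set $N$ is a random isolating neighborhood if $\mathrm{Inv}N(\omega)\subset\mathrm{int}N(\omega)$;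 $S$ is a random isolated invariant set if $S=\mathrm{Inv}N$ for such $N$. Exit set: $N^-(\omega)=\{x\in N(\omega):\varphi(\omega,x)\notin\mathrm{int}N(\theta\omega)\}$. A random neighborhood of $A$ in $N$ is a random set $W\subset N$ with $A(\omega)$ in the interior of $W(\omega)$ relative to $N(\omega)$. A random filtration pair for $S$ is a pair $(N,L)$ with $N$ a random isolating neighborhood, $S=\mathrm{Inv}N$, $L\subset N$ random compact, $N=\mathrm{cl}(\mathrm{int}N)$, $L=\mathrm{cl}(\mathrm{int}L)$, such that $\mathrm{cl}(N\setminus L)$ is a random isolating neighborhood of $S$ (i.e. with $\mathrm{Inv}\,\mathrm{cl}(N\setminus L)=S$), $L$ is a random neighborhood of $N^-$ in $N$, and $\varphi(\omega,L(\omega))\cap\mathrm{cl}(N(\theta\omega)\setminus L(\theta\omega))=\emptyset$. The random pointed space $N_L(\omega)$ is the quotient $N(\omega)/L(\omega)$ with the collapsed point $[L(\omega)]$ as base point (if $L(\omega)=\emptyset$, $N_L(\omega)=N(\omega)\cup\{[\emptyset]\}$ with an isolated base point); $p(\omega,\cdot):N(\omega)\to N_L(\omega)$ is the quotient map. The random pointed space map associated to $P$ is $\varphi_P(\omega,x)=[L(\theta\omega)]$ if $x=[L(\omega)]$ or $\varphi(\omega,x)\notin N(\theta\omega)$, and $\varphi_P(\omega,x)=p(\theta\omega,\varphi(\omega,x))$ otherwise. *)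

theory Defs
  imports "HOL-Analysis.Analysis" "HOL-Probability.Probability"
begin

text \<open>theta is the base map, theta' its inverse. theta_n for integer n.\<close>
definition theta_int :: "('w \<Rightarrow> 'w) \<Rightarrow> ('w \<Rightarrow> 'w) \<Rightarrow> int \<Rightarrow> 'w \<Rightarrow> 'w" where
  "theta_int \<theta> \<theta>' n = (if n \<ge> 0 then \<theta> ^^ nat n else \<theta>' ^^ nat (- n))"

primrec phi_pos :: "('w \<Rightarrow> 'a \<Rightarrow> 'a) \<Rightarrow> ('w \<Rightarrow> 'w) \<Rightarrow> nat \<Rightarrow> 'w \<Rightarrow> 'a \<Rightarrow> 'a" where
  "phi_pos \<phi> \<theta> 0 \<omega> x = x"
| "phi_pos \<phi> \<theta> (Suc n) \<omega> x = \<phi> ((\<theta> ^^ n) \<omega>) (phi_pos \<phi> \<theta> n \<omega> x)"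

primrec phi_neg :: "('w \<Rightarrow> 'a \<Rightarrow> 'a) \<Rightarrow> ('w \<Rightarrow> 'w) \<Rightarrow> nat \<Rightarrow> 'w \<Rightarrow> 'a \<Rightarrow> 'a" where
  "phi_neg \<phi> \<theta>' 0 \<omega> x = x"
| "phi_neg \<phi> \<theta>' (Suc n) \<omega> x = inv (\<phi> ((\<theta>' ^^ Suc n) \<omega>)) (phi_neg \<phi> \<theta>' n \<omega> x)"

definition phi_int :: "('w \<Rightarrow> 'a \<Rightarrow> 'a) \<Rightarrow> ('w \<Rightarrow> 'w) \<Rightarrow> ('w \<Rightarrow> 'w) \<Rightarrow> int \<Rightarrow> 'w \<Rightarrow> 'a \<Rightarrow> 'a" where
  "phi_int \<phi> \<theta> \<theta>' n = (if n \<ge> 0 then phi_pos \<phi> \<theta> (nat n) else phi_neg \<phi> \<theta>' (nat (- n)))"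

definition rdist :: "'a::metric_space \<Rightarrow> 'a set \<Rightarrow> ereal" where
  "rdist x D = (if D = {} then \<infinity> else ereal (infdist x D))"

definition random_compact_set :: "'w measure \<Rightarrow> ('w \<Rightarrow> 'a::metric_space set) \<Rightarrow> bool" where
  "random_compact_set M D \<longleftrightarrow>
     (\<forall>\<omega>\<in>space M. compact (D \<omega>)) \<and> (\<forall>x. (\<lambda>\<omega>. rdist x (D \<omega>)) \<in> borel_measurable M)"

definition Inv :: "'w measure \<Rightarrow> ('w \<Rightarrow> 'a \<Rightarrow> 'a) \<Rightarrow> ('w \<Rightarrow> 'w) \<Rightarrow> ('w \<Rightarrow> 'w)
                   \<Rightarrow> ('w \<Rightarrow> 'a set) \<Rightarrow> 'w \<Rightarrow> 'a set" where
  "Inv M \<phi> \<theta> \<theta>' A \<omega> =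
     {x \<in> A \<omega>. \<forall>n::int. phi_int \<phi> \<theta> \<theta>' n \<omega> x \<in> A (theta_int \<theta> \<theta>' n \<omega>)}"

definition random_isolating_nbhd ::
  "'w measure \<Rightarrow> ('w \<Rightarrow> 'a::metric_space \<Rightarrow> 'a) \<Rightarrow> ('w \<Rightarrow> 'w) \<Rightarrow> ('w \<Rightarrow> 'w) \<Rightarrow> ('w \<Rightarrow> 'a set) \<Rightarrow> bool" where
  "random_isolating_nbhd M \<phi> \<theta> \<theta>' N \<longleftrightarrow>
     random_compact_set M N \<and> (\<forall>\<omega>\<in>space M. Inv M \<phi> \<theta> \<theta>' N \<omega> \<subseteq> interior (N \<omega>))"

definition exit_set :: "('w \<Rightarrow> 'a::topological_space \<Rightarrow> 'a) \<Rightarrow> ('w \<Rightarrow> 'w) \<Rightarrow> ('w \<Rightarrow> 'a set) \<Rightarrow> 'w \<Rightarrow> 'a set" where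
  "exit_set \<phi> \<theta> N \<omega> = {x \<in> N \<omega>. \<phi> \<omega> x \<notin> interior (N (\<theta> \<omega>))}"

definition random_nbhd_in ::
  "'w measure \<Rightarrow> ('w \<Rightarrow> 'a::metric_space set) \<Rightarrow> ('w \<Rightarrow> 'a set) \<Rightarrow> ('w \<Rightarrow> 'a set) \<Rightarrow> bool" where
  "random_nbhd_in M W A N \<longleftrightarrow>
     (\<forall>\<omega>\<in>space M. W \<omega> \<subseteq> N \<omega> \<and> A \<omega> \<subseteq> (subtopology euclidean (N \<omega>)) interior_of (W \<omega>))"

definition random_filtration_pair ::
  "'w measure \<Rightarrow> ('w \<Rightarrow> 'a::metric_space \<Rightarrow> 'a) \<Rightarrow> ('w \<Rightarrow> 'w) \<Rightarrow> ('w \<Rightarrow> 'w)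
     \<Rightarrow> ('w \<Rightarrow> 'a set) \<Rightarrow> ('w \<Rightarrow> 'a set) \<Rightarrow> ('w \<Rightarrow> 'a set) \<Rightarrow> bool" where
  "random_filtration_pair M \<phi> \<theta> \<theta>' S N L \<longleftrightarrow>
     random_isolating_nbhd M \<phi> \<theta> \<theta>' N \<and>
     (\<forall>\<omega>\<in>space M. S \<omega> = Inv M \<phi> \<theta> \<theta>' N \<omega>) \<and>
     random_compact_set M L \<and>
     (\<forall>\<omega>\<in>space M. L \<omega> \<subseteq> N \<omega>) \<and>
     (\<forall>\<omega>\<in>space M. N \<omega> = closure (interior (N \<omega>))) \<and>
     (\<forall>\<omega>\<in>space M. L \<omega> = closure (interior (L \<omega>))) \<and>
     random_isolating_nbhd M \<phi> \<theta> \<theta>' (\<lambda>\<omega>. closure (N \<omega> - L \<omega>)) \<and>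
     (\<forall>\<omega>\<in>space M. Inv M \<phi> \<theta> \<theta>' (\<lambda>\<omega>. closure (N \<omega> - L \<omega>)) \<omega> = S \<omega>) \<and>
     random_nbhd_in M L (exit_set \<phi> \<theta> N) N \<and>
     (\<forall>\<omega>\<in>space M. \<phi> \<omega> ` L \<omega> \<inter> closure (N (\<theta> \<omega>) - L (\<theta> \<omega>)) = {})"

text \<open>Points of N(w)/L(w) are represented in 'a option: None is the base point [L(w)],
  Some x stands for the class of x in N(w) - L(w).\<close>

definition qmap :: "'a set \<Rightarrow> 'a \<Rightarrow> 'a option" where
  "qmap L x = (if x \<in> L then None else Some x)"

definition NL_carrier :: "'a set \<Rightarrow> 'a set \<Rightarrow> 'a option set" where
  "NL_carrier N L = insert None (qmap L ` N)"

text \<open>quotient topology of N/L (with isolated base point when L is empty)\<close>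
definition NL_top :: "'a::topological_space set \<Rightarrow> 'a set \<Rightarrow> 'a option topology" where
  "NL_top N L = topology (\<lambda>U. U \<subseteq> NL_carrier N L \<and>
      openin (subtopology euclidean N) {x \<in> N. qmap L x \<in> U})"

definition phi_P :: "('w \<Rightarrow> 'a \<Rightarrow> 'a) \<Rightarrow> ('w \<Rightarrow> 'w) \<Rightarrow> ('w \<Rightarrow> 'a set) \<Rightarrow> ('w \<Rightarrow> 'a set)
                      \<Rightarrow> 'w \<Rightarrow> 'a option \<Rightarrow> 'a option" where
  "phi_P \<phi> \<theta> N L \<omega> z = (case z of None \<Rightarrow> None
      | Some x \<Rightarrow> (if \<phi> \<omega> x \<notin> N (\<theta> \<omega>) then None else qmap (L (\<theta> \<omega>)) (\<phi> \<omega> x)))"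

definition borel_opt :: "'a::topological_space option measure" where
  "borel_opt = sigma UNIV (insert {None} {Some ` U | U. open U})"

end

theory Submission
  imports Defs
begin

text \<open>Near the base point, phi_P(w) is constant: phi(w) maps L(w) into the open complement of
  cl(N(theta w) - L(theta w)), so a whole relative neighbourhood W of L(w) in N(w) is sent to the
  base point, and the image of W in N(w)/L(w) is an open neighbourhood of [L(w)]. The set
  N(w) - L(w) is relatively open, and since L(w) contains the exit set, phi(w) maps it into
  N(theta w), where phi_P(w) is the quotient map composed with phi(w). Pasting over these two
  open pieces gives continuity. Measurability in w reduces to measurability of
  {w. g(w) \<in> D(w)} for a random closed set D, which is tested against a countable dense set.\<close>

lemma openin_NL_top:
  "openin (NL_top N L) U \<longleftrightarrow> U \<subseteq> NL_carrier N L \<and> openin (top_of_set N) {x \<in> N. qmap L x \<in> U}"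
proof -
  have "istopology (\<lambda>U. U \<subseteq> NL_carrier N L \<and> openin (top_of_set N) {x \<in> N. qmap L x \<in> U})"
  proof -
    have "{x \<in> N. qmap L x \<in> S \<inter> T} = {x \<in> N. qmap L x \<in> S} \<inter> {x \<in> N. qmap L x \<in> T}" for S T
      by auto
    moreover have "{x \<in> N. qmap L x \<in> \<Union>K} = (\<Union>S\<in>K. {x \<in> N. qmap L x \<in> S})" for K
      by auto
    ultimately show ?thesis
      unfolding istopology_def by auto
  qed
  then show ?thesis
    by (simp add: NL_top_def)
qed

lemma topspace_NL_top [simp]: "topspace (NL_top N L) = NL_carrier N L"
proof -
  have "{x \<in> N. qmap L x \<in> NL_carrier N L} = N"
    by (auto simp: NL_carrier_def)
  then have "openin (NL_top N L) (NL_carrier N L)"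
    by (simp add: openin_NL_top)
  then show ?thesis
    by (auto simp: topspace_def openin_NL_top)
qed

lemma continuous_map_qmap: "continuous_map (top_of_set N) (NL_top N L) (qmap L)"
  unfolding continuous_map_openin_preimage_eq
  by (auto simp: openin_NL_top NL_carrier_def Int_def)

lemma continuous_map_from_NL_top:
  assumes "continuous_map (top_of_set N) X (g \<circ> qmap L)" and "g None \<in> topspace X"
  shows "continuous_map (NL_top N L) X g"
  unfolding continuous_map_openin_preimage_eq
proof (intro conjI allI impI)
  show "g \<in> topspace (NL_top N L) \<rightarrow> topspace X"
    using assms continuous_map_image_subset_topspace by (fastforce simp: NL_carrier_def)
next
  fix U assume "openin X U"
  then have "openin (top_of_set N) {x \<in> N. g (qmap L x) \<in> U}"
    using assms(1) by (simp add: continuous_map_openin_preimage_eq Int_def conj_commute)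
  moreover have "{x \<in> N. qmap L x \<in> NL_carrier N L \<inter> g -` U} = {x \<in> N. g (qmap L x) \<in> U}"
    by (auto simp: NL_carrier_def)
  ultimately show "openin (NL_top N L) (topspace (NL_top N L) \<inter> g -` U)"
    by (simp add: openin_NL_top)
qed

lemma openin_NL_top_saturated:
  assumes "openin (top_of_set N) W" and "L \<subseteq> W"
  shows "openin (NL_top N L) (insert None (qmap L ` W))"
proof -
  have "W \<subseteq> N"
    using assms(1) by (rule openin_imp_subset)
  moreover have "{x \<in> N. qmap L x \<in> insert None (qmap L ` W)} = W"
    using assms(2) \<open>W \<subseteq> N\<close> by (auto simp: qmap_def split: if_splits)
  ultimately show ?thesis
    using assms(1) by (auto simp: openin_NL_top NL_carrier_def)
qed

lemma continuous_map_paste_open_pair: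
  assumes "openin X U" and "openin X V" and "topspace X \<subseteq> U \<union> V"
    and "continuous_map (subtopology X U) Y f" and "continuous_map (subtopology X V) Y g"
    and "\<And>x. x \<in> U \<Longrightarrow> h x = f x" and "\<And>x. x \<in> V \<Longrightarrow> h x = g x"
  shows "continuous_map X Y h"
proof (rule pasting_lemma [where I = UNIV and T = "\<lambda>b. if b then U else V"
      and f = "\<lambda>b. if b then f else g"])
  show "\<exists>b. b \<in> UNIV \<and> x \<in> (if b then U else V) \<and> h x = (if b then f else g) x"
    if "x \<in> topspace X" for x
    using that assms(3,6,7) by (cases "x \<in> U") auto
  show "(if b then f else g) x = (if b' then f else g) x"
    if "x \<in> topspace X \<inter> (if b then U else V) \<inter> (if b' then U else V)" for b b' x
    using that assms(6)[of x] assms(7)[of x] by (cases b; cases b') auto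
qed (use assms in auto)

lemma phi_P_None [simp]: "phi_P \<phi> \<theta> N L \<omega> None = None"
  by (simp add: phi_P_def)

lemma phi_P_Some:
  "phi_P \<phi> \<theta> N L \<omega> (Some x) =
     (if \<phi> \<omega> x \<in> N (\<theta> \<omega>) - L (\<theta> \<omega>) then Some (\<phi> \<omega> x) else None)"
  by (simp add: phi_P_def qmap_def)

lemma L_nbhd_mapped_to_base_point:
  assumes "continuous_on UNIV (\<phi> \<omega>)" and "L \<omega> \<subseteq> N \<omega>"
    and "\<phi> \<omega> ` L \<omega> \<inter> closure (N (\<theta> \<omega>) - L (\<theta> \<omega>)) = {}"
  obtains W where "openin (top_of_set (N \<omega>)) W" and "L \<omega> \<subseteq> W"
    and "\<And>x. x \<in> W \<Longrightarrow> phi_P \<phi> \<theta> N L \<omega> (qmap (L \<omega>) x) = None"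
proof
  define C where "C = closure (N (\<theta> \<omega>) - L (\<theta> \<omega>))"
  show "openin (top_of_set (N \<omega>)) (N \<omega> \<inter> \<phi> \<omega> -` (- C))"
    unfolding C_def using assms(1) by (intro openin_open_Int open_vimage) auto
  show "L \<omega> \<subseteq> N \<omega> \<inter> \<phi> \<omega> -` (- C)"
    using assms(2,3) unfolding C_def by auto
  show "phi_P \<phi> \<theta> N L \<omega> (qmap (L \<omega>) x) = None" if "x \<in> N \<omega> \<inter> \<phi> \<omega> -` (- C)" for x
  proof -
    have "\<phi> \<omega> x \<notin> N (\<theta> \<omega>) - L (\<theta> \<omega>)"
      using that closure_subset[of "N (\<theta> \<omega>) - L (\<theta> \<omega>)"] unfolding C_def by blast
    then show ?thesis
      by (auto simp: qmap_def phi_P_Some)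
  qed
qed

lemma base_point_in_interior_phi_P_fiber:
  assumes "continuous_on UNIV (\<phi> \<omega>)" and "L \<omega> \<subseteq> N \<omega>"
    and "\<phi> \<omega> ` L \<omega> \<inter> closure (N (\<theta> \<omega>) - L (\<theta> \<omega>)) = {}"
  shows "None \<in> (NL_top (N \<omega>) (L \<omega>)) interior_of
                  {z \<in> NL_carrier (N \<omega>) (L \<omega>). phi_P \<phi> \<theta> N L \<omega> z = None}"
proof -
  obtain W where W: "openin (top_of_set (N \<omega>)) W" "L \<omega> \<subseteq> W"
    and absorbed: "\<And>x. x \<in> W \<Longrightarrow> phi_P \<phi> \<theta> N L \<omega> (qmap (L \<omega>) x) = None"
    using L_nbhd_mapped_to_base_point[of \<phi> \<omega> L N \<theta>] assms by blast
  have "openin (NL_top (N \<omega>) (L \<omega>)) (insert None (qmap (L \<omega>) ` W))"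
    using W by (rule openin_NL_top_saturated)
  moreover have "insert None (qmap (L \<omega>) ` W)
      \<subseteq> {z \<in> NL_carrier (N \<omega>) (L \<omega>). phi_P \<phi> \<theta> N L \<omega> z = None}"
    using absorbed openin_imp_subset[OF W(1)] by (auto simp: NL_carrier_def)
  ultimately show ?thesis
    using interior_of_maximal_eq by blast
qed

lemma continuous_map_phi_P:
  assumes cont: "continuous_on UNIV (\<phi> \<omega>)" and "closed (L \<omega>)" and "L \<omega> \<subseteq> N \<omega>"
    and exit: "\<And>x. x \<in> N \<omega> - L \<omega> \<Longrightarrow> \<phi> \<omega> x \<in> interior (N (\<theta> \<omega>))"
    and "\<phi> \<omega> ` L \<omega> \<inter> closure (N (\<theta> \<omega>) - L (\<theta> \<omega>)) = {}"
  shows "continuous_map (NL_top (N \<omega>) (L \<omega>)) (NL_top (N (\<theta> \<omega>)) (L (\<theta> \<omega>)))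
           (phi_P \<phi> \<theta> N L \<omega>)"
proof (rule continuous_map_from_NL_top)
  obtain W where W: "openin (top_of_set (N \<omega>)) W" "L \<omega> \<subseteq> W"
    and absorbed: "\<And>x. x \<in> W \<Longrightarrow> phi_P \<phi> \<theta> N L \<omega> (qmap (L \<omega>) x) = None"
    using L_nbhd_mapped_to_base_point[of \<phi> \<omega> L N \<theta>] assms by blast
  define V where "V = N \<omega> - L \<omega>"
  have V: "openin (top_of_set (N \<omega>)) V"
    unfolding V_def Diff_eq using \<open>closed (L \<omega>)\<close> by (intro openin_open_Int) auto
  have on_V: "phi_P \<phi> \<theta> N L \<omega> (qmap (L \<omega>) x) = qmap (L (\<theta> \<omega>)) (\<phi> \<omega> x)" if "x \<in> V" for x
  proof -
    have "\<phi> \<omega> x \<in> N (\<theta> \<omega>)"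
      using that exit interior_subset unfolding V_def by blast
    then show ?thesis
      using that by (simp add: V_def qmap_def phi_P_Some)
  qed
  have "continuous_map (top_of_set V) (top_of_set (N (\<theta> \<omega>))) (\<phi> \<omega>)"
    unfolding continuous_map_in_subtopology
    using exit interior_subset continuous_on_subset[OF cont] by (auto simp: V_def)
  moreover have "subtopology (top_of_set (N \<omega>)) V = top_of_set V"
    unfolding V_def by (simp add: subtopology_subtopology Int_absorb1)
  ultimately have cont_V: "continuous_map (subtopology (top_of_set (N \<omega>)) V)
      (NL_top (N (\<theta> \<omega>)) (L (\<theta> \<omega>))) (qmap (L (\<theta> \<omega>)) \<circ> \<phi> \<omega>)"
    using continuous_map_compose continuous_map_qmap by metis
  show "continuous_map (top_of_set (N \<omega>)) (NL_top (N (\<theta> \<omega>)) (L (\<theta> \<omega>)))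
      (phi_P \<phi> \<theta> N L \<omega> \<circ> qmap (L \<omega>))"
  proof (rule continuous_map_paste_open_pair[OF W(1) V _ _ cont_V])
    show "topspace (top_of_set (N \<omega>)) \<subseteq> W \<union> V"
      using W(2) by (auto simp: V_def)
  qed (use absorbed on_V in \<open>auto simp: NL_carrier_def\<close>)
qed (simp add: NL_carrier_def)

lemma mem_closed_iff_dense_approx:
  fixes D :: "'a::metric_space set"
  assumes "closed D" and dense: "\<And>U. open U \<Longrightarrow> U \<noteq> {} \<Longrightarrow> \<exists>q\<in>C. q \<in> U"
  shows "x \<in> D \<longleftrightarrow>
    (\<forall>n. \<exists>q\<in>C. dist x q < 1 / Suc n \<and> rdist q D < ereal (1 / Suc n))"
proof
  assume "x \<in> D"
  show "\<forall>n. \<exists>q\<in>C. dist x q < 1 / Suc n \<and> rdist q D < ereal (1 / Suc n)"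
  proof
    fix n
    obtain q where "q \<in> C" and q: "dist x q < 1 / Suc n"
      using dense[of "ball x (1 / Suc n)"] by (auto simp: dist_commute)
    have "infdist q D \<le> dist q x"
      using \<open>x \<in> D\<close> by (rule infdist_le)
    then have "rdist q D < ereal (1 / Suc n)"
      using q \<open>x \<in> D\<close> by (auto simp: rdist_def dist_commute)
    then show "\<exists>q\<in>C. dist x q < 1 / Suc n \<and> rdist q D < ereal (1 / Suc n)"
      using \<open>q \<in> C\<close> q by blast
  qed
next
  assume approx: "\<forall>n. \<exists>q\<in>C. dist x q < 1 / Suc n \<and> rdist q D < ereal (1 / Suc n)"
  then have "D \<noteq> {}"
    by (auto simp: rdist_def)
  have small: "infdist x D < 2 / Suc n" for n
  proof -
    obtain q where "dist x q < 1 / Suc n" and "infdist q D < 1 / Suc n"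
      using approx \<open>D \<noteq> {}\<close> by (auto simp: rdist_def)
    moreover have "infdist x D \<le> infdist q D + dist x q"
      by (rule infdist_triangle)
    ultimately show ?thesis
      by simp
  qed
  have "infdist x D \<le> 0"
  proof (rule field_le_epsilon)
    fix e :: real assume "0 < e"
    then obtain n :: nat where "1 / Suc n < e / 2"
      by (metis nat_approx_posE half_gt_zero)
    then have "2 / Suc n < e"
      by (simp add: field_simps)
    then show "infdist x D \<le> 0 + e"
      using small[of n] by linarith
  qed
  then show "x \<in> D"
    using in_closed_iff_infdist_zero[OF \<open>closed D\<close> \<open>D \<noteq> {}\<close>] infdist_nonneg[of x D] by simp
qed

lemma sets_mem_random_closed_set:
  fixes g :: "'w \<Rightarrow> 'a::{metric_space, second_countable_topology}"
  assumes "g \<in> borel_measurable M"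
    and "\<And>y. (\<lambda>\<omega>. rdist y (D \<omega>)) \<in> borel_measurable M"
    and "\<And>\<omega>. \<omega> \<in> space M \<Longrightarrow> closed (D \<omega>)"
  shows "{\<omega> \<in> space M. g \<omega> \<in> D \<omega>} \<in> sets M"
proof -
  obtain C :: "'a set" where "countable C" and dense: "\<And>U. open U \<Longrightarrow> U \<noteq> {} \<Longrightarrow> \<exists>q\<in>C. q \<in> U"
    using countable_dense_setE by blast
  have "{\<omega> \<in> space M. g \<omega> \<in> D \<omega>} = (\<Inter>n. \<Union>q\<in>C.
      {\<omega> \<in> space M. dist (g \<omega>) q < 1 / Suc n \<and> rdist q (D \<omega>) < ereal (1 / Suc n)})"
    using mem_closed_iff_dense_approx[OF assms(3) dense] by auto
  also have "\<dots> \<in> sets M"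
    using \<open>countable C\<close> assms(1,2)
    by (intro sets.countable_INT sets.countable_UN') (auto intro: measurable_sets)
  finally show ?thesis .
qed

lemma measurable_Some_borel_opt: "Some \<in> borel \<rightarrow>\<^sub>M borel_opt"
  unfolding borel_opt_def
  by (rule measurable_measure_of) (auto simp: vimage_def image_iff)

lemma measurable_phi_P_Some:
  fixes \<phi> :: "'w \<Rightarrow> 'a::{metric_space, second_countable_topology} \<Rightarrow> 'a"
  assumes "(\<lambda>\<omega>. \<phi> \<omega> x) \<in> borel_measurable M" and "\<theta> \<in> M \<rightarrow>\<^sub>M M"
    and "random_compact_set M N" and "random_compact_set M L"
  shows "(\<lambda>\<omega>. phi_P \<phi> \<theta> N L \<omega> (Some x)) \<in> M \<rightarrow>\<^sub>M borel_opt"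
proof -
  have mem: "{\<omega> \<in> space M. \<phi> \<omega> x \<in> D (\<theta> \<omega>)} \<in> sets M" if "random_compact_set M D" for D
  proof (rule sets_mem_random_closed_set[OF assms(1)])
    show "(\<lambda>\<omega>. rdist y (D (\<theta> \<omega>))) \<in> borel_measurable M" for y
      using that measurable_compose[OF assms(2)] by (auto simp: random_compact_set_def)
    show "closed (D (\<theta> \<omega>))" if "\<omega> \<in> space M" for \<omega>
      using \<open>random_compact_set M D\<close> measurable_space[OF assms(2) that]
      by (auto simp: random_compact_set_def compact_imp_closed)
  qed
  let ?E = "{\<omega>. \<phi> \<omega> x \<in> N (\<theta> \<omega>) - L (\<theta> \<omega>)}"
  have "?E \<inter> space M = {\<omega> \<in> space M. \<phi> \<omega> x \<in> N (\<theta> \<omega>)} - {\<omega> \<in> space M. \<phi> \<omega> x \<in> L (\<theta> \<omega>)}"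
    by auto
  then have "?E \<inter> space M \<in> sets M"
    using mem assms(3,4) by auto
  moreover have "(\<lambda>\<omega>. Some (\<phi> \<omega> x)) \<in> M \<rightarrow>\<^sub>M borel_opt"
    using measurable_compose[OF assms(1) measurable_Some_borel_opt] by simp
  ultimately have "(\<lambda>\<omega>. if \<omega> \<in> ?E then Some (\<phi> \<omega> x) else None) \<in> M \<rightarrow>\<^sub>M borel_opt"
    by (intro measurable_If_set) (auto simp: borel_opt_def)
  then show ?thesis
    by (simp add: phi_P_Some)
qed

lemma random_filtration_pairD:
  assumes "random_filtration_pair M \<phi> \<theta> \<theta>' S N L"
  shows "random_compact_set M N" and "random_compact_set M L"
    and "\<forall>\<omega>\<in>space M. L \<omega> \<subseteq> N \<omega>"
    and "random_nbhd_in M L (exit_set \<phi> \<theta> N) N"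
    and "\<forall>\<omega>\<in>space M. \<phi> \<omega> ` L \<omega> \<inter> closure (N (\<theta> \<omega>) - L (\<theta> \<omega>)) = {}"
  using assms unfolding random_filtration_pair_def random_isolating_nbhd_def
  by - (elim conjE, assumption)+

lemma filtration_pair_maps_into_interior:
  assumes "random_filtration_pair M \<phi> \<theta> \<theta>' S N L" and "\<omega> \<in> space M" and "x \<in> N \<omega> - L \<omega>"
  shows "\<phi> \<omega> x \<in> interior (N (\<theta> \<omega>))"
proof (rule ccontr)
  assume "\<phi> \<omega> x \<notin> interior (N (\<theta> \<omega>))"
  then have "x \<in> exit_set \<phi> \<theta> N \<omega>"
    using assms(3) by (simp add: exit_set_def)
  moreover have "exit_set \<phi> \<theta> N \<omega> \<subseteq> (top_of_set (N \<omega>)) interior_of (L \<omega>)"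
    using random_filtration_pairD(4)[OF assms(1)] assms(2) unfolding random_nbhd_in_def by blast
  ultimately show False
    using assms(3) interior_of_subset[of "top_of_set (N \<omega>)" "L \<omega>"] by blast
qed

theorem mainTheorem6:
  fixes M :: "'w measure"
    and \<theta> \<theta>' :: "'w \<Rightarrow> 'w"
    and \<phi> :: "'w \<Rightarrow> 'a::{complete_space, second_countable_topology} \<Rightarrow> 'a"
    and S N L :: "'w \<Rightarrow> 'a set"
  assumes "prob_space M"
    and "\<theta> \<in> M \<rightarrow>\<^sub>M M" and "\<theta>' \<in> M \<rightarrow>\<^sub>M M"
    and "\<forall>\<omega>\<in>space M. \<theta>' (\<theta> \<omega>) = \<omega> \<and> \<theta> (\<theta>' \<omega>) = \<omega>"
    and "distr M M \<theta> = M"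
    and "locally_compact_space (euclidean :: 'a topology)"
    and "\<forall>x. (\<lambda>\<omega>. \<phi> \<omega> x) \<in> borel_measurable M"
    and "\<forall>\<omega>\<in>space M. \<exists>g. homeomorphism UNIV UNIV (\<phi> \<omega>) g"
    and "random_filtration_pair M \<phi> \<theta> \<theta>' S N L"
  shows "(\<forall>\<omega>\<in>space M.
           phi_P \<phi> \<theta> N L \<omega> None = None
         \<and> None \<in> (NL_top (N \<omega>) (L \<omega>)) interior_of
                    {z \<in> NL_carrier (N \<omega>) (L \<omega>). phi_P \<phi> \<theta> N L \<omega> z = None}
         \<and> continuous_map (NL_top (N \<omega>) (L \<omega>)) (NL_top (N (\<theta> \<omega>)) (L (\<theta> \<omega>)))
                          (phi_P \<phi> \<theta> N L \<omega>))
       \<and> (\<forall>x. (\<lambda>\<omega>. phi_P \<phi> \<theta> N L \<omega> (Some x)) \<in> M \<rightarrow>\<^sub>M borel_opt)"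
proof -
  note N = random_filtration_pairD(1)[OF assms(9)]
    and L = random_filtration_pairD(2)[OF assms(9)]
    and L_sub_N = random_filtration_pairD(3)[OF assms(9), rule_format]
    and disjoint = random_filtration_pairD(5)[OF assms(9), rule_format]
  have "None \<in> (NL_top (N \<omega>) (L \<omega>)) interior_of
                  {z \<in> NL_carrier (N \<omega>) (L \<omega>). phi_P \<phi> \<theta> N L \<omega> z = None}
      \<and> continuous_map (NL_top (N \<omega>) (L \<omega>)) (NL_top (N (\<theta> \<omega>)) (L (\<theta> \<omega>)))
                       (phi_P \<phi> \<theta> N L \<omega>)" if "\<omega> \<in> space M" for \<omega>
  proof -
    have cont: "continuous_on UNIV (\<phi> \<omega>)"
      using bspec[OF assms(8) that] homeomorphism_cont1 by blast
    have "closed (L \<omega>)"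
      using L that unfolding random_compact_set_def by (blast intro: compact_imp_closed)
    moreover have "\<And>x. x \<in> N \<omega> - L \<omega> \<Longrightarrow> \<phi> \<omega> x \<in> interior (N (\<theta> \<omega>))"
      using assms(9) that by (rule filtration_pair_maps_into_interior)
    ultimately show ?thesis
      using base_point_in_interior_phi_P_fiber[of \<phi> \<omega> L N \<theta>] continuous_map_phi_P[of \<phi> \<omega> L N \<theta>]
        cont L_sub_N[OF that] disjoint[OF that]
      by blast
  qed
  moreover have "(\<lambda>\<omega>. phi_P \<phi> \<theta> N L \<omega> (Some x)) \<in> M \<rightarrow>\<^sub>M borel_opt" for x
    using assms(7) by (intro measurable_phi_P_Some[OF _ assms(2) N L]) blast
  ultimately show ?thesis
    by simp
qed

end
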